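(* Let $f\in\mathcal S_{\mathbf M}$. Then for any $\tau>0$, $n\in\mathbb N$ and $\varphi\in\Phi$, $$E_n(f)^*_{\mathbf M}\le C_{n,\varphi}(\tau)\,\omega_\varphi\Big(f,\frac{\tau}{n}\Big)^*_{\mathbf M},$$ where $$C_{n,\varphi}(\tau):=\inf_{v\in V(\tau)}\frac{v(\tau)-v(0)}{I_{n,\varphi}(\tau,v)},\qquad I_{n,\varphi}(\tau,v):=\inf_{k\in\mathbb N,\,k\ge n}\int_0^\tau\varphi\Big(\frac{ku}{n}\Big)\,dv(u).$$ Moreover, there exists a function $v^*\in V(\tau)$ at which the infimum over $v\in V(\tau)$ in the definition of $C_{n,\varphi}(\tau)$ is attained.
   Context: $L$ is the space of $2\pi$-periodic Lebesgue integrable functions, with Fourier coefficients $\widehat f(k)=(2\pi)^{-1}\int_0^{2\pi}f(x)e^{-\mathrm{i}kx}\,dx$, $k\in\mathbb Z$. Let $\mathbf M=\{M_k\}_{k\in\mathbb Z}$ be a sequence of Orlicz functions on $[0,\infty)$ (each $M_k$ nondecreasing and convex, $M_k(0)=0$, $M_k(u)\to\infty$ as $u\to\infty$). For a complex sequence $c=\{c_k\}_{k\in\mathbb Z}$, its Luxemburg norm is $\|c\|_{\mathbf M}=\inf\{a>0:\sum_kM_k(|c_k|/a)\le1\}$; with $\tilde M_k(v)=\sup\{uv-M_k(u):u\ge0\}$ and $\Lambda$ the set of sequences $\lambda=\{\lambda_k\}$ of positive numbers with $\sum_k\tilde M_k(\lambda_k)\le1$, its Orlicz norm is $\|c\|^*_{\mathbf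 M}=\sup\{\sum_k\lambda_k|c_k|:\lambda\in\Lambda\}$. $\mathcal S_{\mathbf M}$ is the space of $f\in L$ with $\|f\|_{\mathbf M}:=\|\{\widehat f(k)\}\|_{\mathbf M}<\infty$; also $\|f\|^*_{\mathbf M}:=\|\{\widehat f(k)\}\|^*_{\mathbf M}$. $E_n(f)^*_{\mathbf M}=\inf\{\|f-t\|^*_{\mathbf M}: t\in\mathcal T_{n-1}\}$, where $\mathcal T_{n-1}$ is the set of trigonometric polynomials $\sum_{|k|\le n-1}c_ke^{\mathrm{i}kx}$, $c_k\in\mathbb C$. $\Phi$ is the set of all continuous, bounded, nonnegative, even functions $\varphi:\mathbb R\to\mathbb R$ with $\varphi(0)=0$ such that $\{t:\varphi(t)=0\}$ has Lebesgue measure zero. For $\varphi\in\Phi$, $h\in\mathbb R$, $\Delta_h^\varphi f$ denotes the sequence $\{\varphi(kh)\widehat f(k)\}_{k\in\mathbb Z}$, and $\omega_\varphi(f,\delta)^*_{\mathbf M}=\sup_{|h|\le\delta}\|\Delta_h^\varphi f\|^*_{\mathbf M}$. $V(\tau)$ is the set of bounded nondecreasing functions $v$ on $[0,\tau]$ that are not constant on $[0,\tau]$; the integrals are Lebesgue–Stieltjes integrals. *)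

theory Defs
  imports "HOL-Analysis.Analysis"
begin

definition in_L :: "(real \<Rightarrow> complex) \<Rightarrow> bool" where
  "in_L f \<longleftrightarrow> (\<forall>x. f (x + 2 * pi) = f x) \<and> set_integrable lebesgue {0..2*pi} f"

definition fourier_coeff :: "(real \<Rightarrow> complex) \<Rightarrow> int \<Rightarrow> complex" where
  "fourier_coeff f k =
     complex_of_real (1 / (2 * pi)) *
       (LINT x:{0..2*pi}|lebesgue. f x * exp (- (\<i> * of_int k * complex_of_real x)))"

definition orlicz_fun :: "(real \<Rightarrow> real) \<Rightarrow> bool" where
  "orlicz_fun M \<longleftrightarrow> mono_on {0..} M \<and> convex_on {0..} M \<and> M 0 = 0 \<and>
     filterlim M at_top at_top"

(* Luxemburg norm of a sequence (value +\<infinity> if the defining set is empty) *)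
definition lux_norm :: "(int \<Rightarrow> real \<Rightarrow> real) \<Rightarrow> (int \<Rightarrow> complex) \<Rightarrow> ennreal" where
  "lux_norm M c = (INF a \<in> {a::real. a > 0 \<and>
       (\<Sum>\<^sub>\<infinity>k\<in>(UNIV::int set). ennreal (M k (norm (c k) / a))) \<le> 1}. ennreal a)"

definition conj_fun :: "(real \<Rightarrow> real) \<Rightarrow> real \<Rightarrow> ennreal" where
  "conj_fun M v = (SUP u \<in> {0::real..}. ennreal (u * v - M u))"

definition Lambda_set :: "(int \<Rightarrow> real \<Rightarrow> real) \<Rightarrow> (int \<Rightarrow> real) set" where
  "Lambda_set M = {lam. (\<forall>k. lam k > 0) \<and>
       (\<Sum>\<^sub>\<infinity>k\<in>(UNIV::int set). conj_fun (M k) (lam k)) \<le> 1}"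

definition orl_norm :: "(int \<Rightarrow> real \<Rightarrow> real) \<Rightarrow> (int \<Rightarrow> complex) \<Rightarrow> ennreal" where
  "orl_norm M c = (SUP lam \<in> Lambda_set M.
       (\<Sum>\<^sub>\<infinity>k\<in>(UNIV::int set). ennreal (lam k * norm (c k))))"

definition trig_polys :: "nat \<Rightarrow> (real \<Rightarrow> complex) set" where
  "trig_polys m = {t. \<exists>c :: int \<Rightarrow> complex.
       t = (\<lambda>x. \<Sum>k\<in>{-int m..int m}. c k * exp (\<i> * of_int k * complex_of_real x))}"

definition best_approx :: "(int \<Rightarrow> real \<Rightarrow> real) \<Rightarrow> nat \<Rightarrow> (real \<Rightarrow> complex) \<Rightarrow> ennreal" where
  "best_approx M n f = (INF t \<in> trig_polys (n - 1).
       orl_norm M (fourier_coeff (\<lambda>x. f x - t x)))"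

definition Phi_class :: "(real \<Rightarrow> real) set" where
  "Phi_class = {\<phi>. continuous_on UNIV \<phi> \<and> bounded (range \<phi>) \<and> (\<forall>t. \<phi> t \<ge> 0) \<and>
       (\<forall>t. \<phi> (- t) = \<phi> t) \<and> \<phi> 0 = 0 \<and> {t. \<phi> t = 0} \<in> null_sets lborel}"

definition modulus :: "(int \<Rightarrow> real \<Rightarrow> real) \<Rightarrow> (real \<Rightarrow> real) \<Rightarrow> (real \<Rightarrow> complex) \<Rightarrow> real \<Rightarrow> ennreal" where
  "modulus M \<phi> f \<delta> = (SUP h \<in> {h. \<bar>h\<bar> \<le> \<delta>}.
       orl_norm M (\<lambda>k. complex_of_real (\<phi> (of_int k * h)) * fourier_coeff f k))"

definition V_set :: "real \<Rightarrow> (real \<Rightarrow> real) set" where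
  "V_set \<tau> = {v. bounded (v ` {0..\<tau>}) \<and> mono_on {0..\<tau>} v \<and>
       (\<exists>x\<in>{0..\<tau>}. \<exists>y\<in>{0..\<tau>}. v x \<noteq> v y)}"

(* extension of v from [0,tau] by constants, and its right-continuous regularisation;
   the Lebesgue-Stieltjes measure dv on [0,tau] is the interval measure of the latter
   (atoms v(0+)-v(0) at 0 and v(tau)-v(tau-) at tau, total mass v(tau)-v(0)) *)
definition ext_fun :: "real \<Rightarrow> (real \<Rightarrow> real) \<Rightarrow> real \<Rightarrow> real" where
  "ext_fun \<tau> v x = (if x < 0 then v 0 else if x > \<tau> then v \<tau> else v x)"

definition rc_fun :: "real \<Rightarrow> (real \<Rightarrow> real) \<Rightarrow> real \<Rightarrow> real" where
  "rc_fun \<tau> v x = (INF y \<in> {x<..}. ext_fun \<tau> v y)"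

definition LS_measure :: "real \<Rightarrow> (real \<Rightarrow> real) \<Rightarrow> real measure" where
  "LS_measure \<tau> v = interval_measure (rc_fun \<tau> v)"

definition LS_integral :: "real \<Rightarrow> (real \<Rightarrow> real) \<Rightarrow> (real \<Rightarrow> real) \<Rightarrow> real" where
  "LS_integral \<tau> v g = (LINT u:{0..\<tau>}|LS_measure \<tau> v. g u)"

definition I_fun :: "nat \<Rightarrow> (real \<Rightarrow> real) \<Rightarrow> real \<Rightarrow> (real \<Rightarrow> real) \<Rightarrow> real" where
  "I_fun n \<phi> \<tau> v = (INF k \<in> {k::nat. k \<ge> n}.
       LS_integral \<tau> v (\<lambda>u. \<phi> (real k * u / real n)))"

definition C_ratio :: "nat \<Rightarrow> (real \<Rightarrow> real) \<Rightarrow> real \<Rightarrow> (real \<Rightarrow> real) \<Rightarrow> ennreal" where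
  "C_ratio n \<phi> \<tau> v = (if I_fun n \<phi> \<tau> v = 0 then top
       else ennreal ((v \<tau> - v 0) / I_fun n \<phi> \<tau> v))"

definition C_const :: "nat \<Rightarrow> (real \<Rightarrow> real) \<Rightarrow> real \<Rightarrow> ennreal" where
  "C_const n \<phi> \<tau> = (INF v \<in> V_set \<tau>. C_ratio n \<phi> \<tau> v)"

end

theory Submission
  imports Defs "HOL-Probability.Probability"
begin

(* Fix v in V(tau) and let mu be its Lebesgue-Stieltjes measure, concentrated on [0,tau].
   Subtracting the partial Fourier sum of degree n-1 leaves exactly the coefficients c_k with
   |k| >= n, and for those the evenness of phi gives I_{n,phi}(tau,v) <= int phi(k u/n) dmu(u).
   So for lambda in Lambda and every finite set F of frequencies
     I * sum_F lambda_k |c_k| <= int sum_F lambda_k |c_k| phi(k u/n) dmu(u)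
                              <= (v(tau) - v(0)) * omega_phi(f, tau/n),
   because for u in [0,tau] the integrand is a partial sum of the Orlicz norm of the sequence
   Delta^phi_{u/n} f.  Taking suprema gives the estimate with the ratio for v in place of C.

   The ratio for v is a decreasing function of I/(v(tau) - v(0)) = inf_k int phi(k u/n) dP(u),
   where P = mu/(v(tau) - v(0)) is a probability measure on [0,tau].  Such measures form a tight
   family, so by Helly's selection theorem a maximising sequence has a weakly convergent
   subsequence; its limit is again a probability measure on [0,tau], hence normalises the measure
   of some v* in V(tau).  As an infimum of integrals of bounded continuous functions, the
   normalised I is upper semicontinuous under weak convergence, so v* is a maximiser. *)

section \<open>Functions of V(tau) and their Lebesgue-Stieltjes measures\<close>

lemma V_set_bounds:
  assumes "v \<in> V_set \<tau>" "x \<in> {0..\<tau>}"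
  shows "v 0 \<le> v x" "v x \<le> v \<tau>"
  using assms by (auto simp: V_set_def intro: mono_onD)

lemma V_set_increase:
  assumes "v \<in> V_set \<tau>"
  shows "v 0 < v \<tau>"
proof (rule ccontr)
  obtain x y where xy: "x \<in> {0..\<tau>}" "y \<in> {0..\<tau>}" "v x \<noteq> v y"
    using assms by (auto simp: V_set_def)
  assume "\<not> v 0 < v \<tau>"
  then have "v x = v 0" "v y = v 0"
    using V_set_bounds[OF assms xy(1)] V_set_bounds[OF assms xy(2)] by linarith+
  with xy(3) show False by simp
qed

lemma V_set_imp_pos:
  assumes "v \<in> V_set \<tau>"
  shows "0 < \<tau>"
proof -
  obtain x y where "x \<in> {0..\<tau>}" "y \<in> {0..\<tau>}" "v x \<noteq> v y"
    using assms by (auto simp: V_set_def)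
  then have "x \<noteq> y" by auto
  with \<open>x \<in> {0..\<tau>}\<close> \<open>y \<in> {0..\<tau>}\<close> show ?thesis by auto
qed

lemma id_in_V_set:
  assumes "0 < \<tau>"
  shows "(\<lambda>x. x) \<in> V_set \<tau>"
proof -
  have "\<exists>x\<in>{0..\<tau>}. \<exists>y\<in>{0..\<tau>}. x \<noteq> y"
    using assms by (intro bexI[of _ 0] bexI[of _ \<tau>]) auto
  then show ?thesis unfolding V_set_def by (auto simp: mono_on_def)
qed

lemma ext_fun_bounds:
  assumes "v \<in> V_set \<tau>"
  shows "v 0 \<le> ext_fun \<tau> v x" "ext_fun \<tau> v x \<le> v \<tau>"
  using V_set_bounds[OF assms] V_set_increase[OF assms] by (auto simp: ext_fun_def)

lemma bdd_below_ext_fun: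
  assumes "v \<in> V_set \<tau>"
  shows "bdd_below (ext_fun \<tau> v ` A)"
  using ext_fun_bounds(1)[OF assms] by (auto intro!: bdd_belowI[of _ "v 0"])

lemma rc_fun_le_ext_fun:
  "v \<in> V_set \<tau> \<Longrightarrow> x < y \<Longrightarrow> rc_fun \<tau> v x \<le> ext_fun \<tau> v y"
  unfolding rc_fun_def by (auto intro: cINF_lower bdd_below_ext_fun)

lemma rc_fun_bounds:
  assumes "v \<in> V_set \<tau>"
  shows "v 0 \<le> rc_fun \<tau> v x" "rc_fun \<tau> v x \<le> v \<tau>"
  using ext_fun_bounds[OF assms] rc_fun_le_ext_fun[OF assms, of x "x + 1"]
  by (auto simp: rc_fun_def intro: cINF_greatest order_trans)

lemma rc_fun_eq_left:
  assumes "v \<in> V_set \<tau>" "x < 0"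
  shows "rc_fun \<tau> v x = v 0"
  using rc_fun_bounds(1)[OF assms(1), of x] rc_fun_le_ext_fun[OF assms(1), of x "x/2"] assms(2)
  by (simp add: ext_fun_def)

lemma rc_fun_eq_right:
  assumes "v \<in> V_set \<tau>" "\<tau> \<le> x"
  shows "rc_fun \<tau> v x = v \<tau>"
proof (rule antisym)
  show "v \<tau> \<le> rc_fun \<tau> v x"
    unfolding rc_fun_def using assms(2) V_set_imp_pos[OF assms(1)]
    by (intro cINF_greatest) (auto simp: ext_fun_def)
qed (rule rc_fun_bounds(2)[OF assms(1)])

lemma rc_fun_mono:
  "v \<in> V_set \<tau> \<Longrightarrow> x \<le> y \<Longrightarrow> rc_fun \<tau> v x \<le> rc_fun \<tau> v y"
  unfolding rc_fun_def by (rule cINF_superset_mono) (auto intro: bdd_below_ext_fun)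

lemma rc_fun_continuous_at_right:
  assumes v: "v \<in> V_set \<tau>"
  shows "continuous (at_right a) (rc_fun \<tau> v)"
proof (subst continuous_at_right_real_increasing)
  show "\<And>x y. x \<le> y \<Longrightarrow> rc_fun \<tau> v x \<le> rc_fun \<tau> v y" by (rule rc_fun_mono[OF v])
next
  show "\<forall>e>0. \<exists>d>0. rc_fun \<tau> v (a + d) - rc_fun \<tau> v a < e"
  proof (intro allI impI)
    fix e :: real assume "e > 0"
    then obtain y where y: "a < y" "ext_fun \<tau> v y < rc_fun \<tau> v a + e"
      using cINF_less_iff[OF _ bdd_below_ext_fun[OF v], of "{a<..}" "rc_fun \<tau> v a + e"]
      by (auto simp: rc_fun_def)
    moreover have "rc_fun \<tau> v (a + (y - a) / 2) \<le> ext_fun \<tau> v y"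
      by (rule rc_fun_le_ext_fun[OF v]) (use y(1) in \<open>simp add: field_simps\<close>)
    ultimately show "\<exists>d>0. rc_fun \<tau> v (a + d) - rc_fun \<tau> v a < e"
      by (intro exI[of _ "(y - a) / 2"]) auto
  qed
qed

(* The shift by v 0 makes the distribution function tend to 0 at -\<infinity>, as the library
   lemmas about interval_measure require. *)
lemma LS_measure_eq_interval_measure:
  "LS_measure \<tau> v = interval_measure (\<lambda>x. rc_fun \<tau> v x - v 0)"
  unfolding LS_measure_def interval_measure_def by simp

lemma sets_LS_measure [simp, measurable_cong]: "sets (LS_measure \<tau> v) = sets borel"
  and space_LS_measure [simp]: "space (LS_measure \<tau> v) = UNIV"
  by (simp_all add: LS_measure_def)

context
  fixes \<tau> :: real and v :: "real \<Rightarrow> real"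
  assumes v: "v \<in> V_set \<tau>"
begin

private lemma interval_measure_conditions:
  defines "G \<equiv> \<lambda>x. rc_fun \<tau> v x - v 0"
  shows "\<And>x y. x \<le> y \<Longrightarrow> G x \<le> G y" "\<And>a. continuous (at_right a) G"
    "(G \<longlongrightarrow> 0) at_bot" "(G \<longlongrightarrow> v \<tau> - v 0) at_top" "0 \<le> v \<tau> - v 0"
proof -
  show "\<And>x y. x \<le> y \<Longrightarrow> G x \<le> G y" using rc_fun_mono[OF v] by (simp add: G_def)
  show "\<And>a. continuous (at_right a) G"
    unfolding G_def by (intro continuous_intros rc_fun_continuous_at_right[OF v])
  show "(G \<longlongrightarrow> 0) at_bot"
    by (rule tendsto_eventually)
       (auto simp: G_def eventually_at_bot_linorder rc_fun_eq_left[OF v] intro!: exI[of _ "-1"])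
  show "(G \<longlongrightarrow> v \<tau> - v 0) at_top"
    by (rule tendsto_eventually)
       (auto simp: G_def eventually_at_top_linorder rc_fun_eq_right[OF v] intro!: exI[of _ \<tau>])
  show "0 \<le> v \<tau> - v 0" using V_set_increase[OF v] by simp
qed

lemma finite_borel_measure_LS_measure: "finite_borel_measure (LS_measure \<tau> v)"
  unfolding LS_measure_eq_interval_measure
  by (rule finite_borel_measure_interval_measure[OF interval_measure_conditions])

lemma emeasure_LS_measure_UNIV: "emeasure (LS_measure \<tau> v) UNIV = v \<tau> - v 0"
  unfolding LS_measure_eq_interval_measure
  by (rule interval_measure_UNIV[OF interval_measure_conditions])

lemma emeasure_LS_measure_atMost: "emeasure (LS_measure \<tau> v) {..x} = rc_fun \<tau> v x - v 0"
  unfolding LS_measure_eq_interval_measure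
  by (rule emeasure_interval_measure_Iic[OF interval_measure_conditions(1-3)])

lemma AE_LS_measure_in_interval: "AE x in LS_measure \<tau> v. x \<in> {0..\<tau>}"
proof -
  have "{..<0} = (\<Union>i. {..- inverse (real (Suc i))})"
  proof (intro equalityI subsetI)
    fix x :: real assume "x \<in> {..<0}"
    then obtain i where "inverse (real (Suc i)) < - x"
      using reals_Archimedean[of "- x"] by auto
    then have "x \<in> {..- inverse (real (Suc i))}" by simp
    then show "x \<in> (\<Union>i. {..- inverse (real (Suc i))})" by blast
  next
    fix x :: real assume "x \<in> (\<Union>i. {..- inverse (real (Suc i))})"
    then obtain i :: nat where "x \<le> - inverse (real (Suc i))" by blast
    moreover have "0 < inverse (real (Suc i))" by simp
    ultimately have "x < 0" by linarith
    then show "x \<in> {..<0}" by simp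
  qed
  moreover have "{..- inverse (real (Suc i))} \<in> null_sets (LS_measure \<tau> v)" for i
    by (simp add: null_sets_def emeasure_LS_measure_atMost rc_fun_eq_left[OF v])
  ultimately have left: "{..<0} \<in> null_sets (LS_measure \<tau> v)" by (metis null_sets_UN)
  interpret finite_borel_measure "LS_measure \<tau> v" by (rule finite_borel_measure_LS_measure)
  have "emeasure (LS_measure \<tau> v) (UNIV - {..\<tau>}) = 0"
    using emeasure_compl[of "{..\<tau>}" "LS_measure \<tau> v"] emeasure_LS_measure_UNIV
      emeasure_LS_measure_atMost[of \<tau>]
    by (simp add: rc_fun_eq_right[OF v])
  then have right: "{\<tau><..} \<in> null_sets (LS_measure \<tau> v)"
    by (simp add: null_sets_def Compl_eq_Diff_UNIV[symmetric])
  show ?thesis by (rule AE_I'[OF null_sets.Un[OF left right]]) auto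
qed

lemma LS_integral_eq_integral:
  assumes "g \<in> borel_measurable borel"
  shows "LS_integral \<tau> v g = integral\<^sup>L (LS_measure \<tau> v) g"
  unfolding LS_integral_def set_lebesgue_integral_def
  using AE_LS_measure_in_interval assms by (intro integral_cong_AE) auto

end

section \<open>Fourier coefficients of the remainder of a partial Fourier sum\<close>

lemma integral_exp_int:
  fixes m :: int
  shows "integral {0..2*pi} (\<lambda>x. exp (\<i> * of_int m * complex_of_real x)) =
    (if m = 0 then 2 * pi else 0)"
proof (cases "m = 0")
  case False
  define a where "a = \<i> * of_int m"
  have "a \<noteq> 0" using False by (simp add: a_def)
  then have "((\<lambda>x. exp (a * x) / a) has_vector_derivative exp (a * t)) (at t within {0..2*pi})"
    for t
    by (intro derivative_eq_intros has_complex_derivative_imp_has_vector_derivative[unfolded o_def]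
        | simp)+
  then have "((\<lambda>t. exp (a * of_real t)) has_integral
      exp (a * complex_of_real (2*pi)) / a - exp (a * of_real 0) / a) {0..2*pi}"
    by (intro fundamental_theorem_of_calculus) auto
  moreover have "exp (a * complex_of_real (2*pi)) = 1"
    using exp_integer_2pi[of "2 * of_int m"] by (simp add: a_def mult_ac)
  ultimately show ?thesis using False by (simp add: a_def integral_unique)
qed (simp add: scaleR_conv_of_real)

lemma set_integrable_mult_exp:
  assumes "set_integrable lebesgue {0..2*pi} f"
  shows "set_integrable lebesgue {0..2*pi} (\<lambda>x. f x * exp (\<i> * of_int j * complex_of_real x))"
proof (rule set_integrable_bound[OF assms])
  have "(\<lambda>x. exp (\<i> * of_int j * complex_of_real x)) \<in> borel_measurable borel"
    by (intro borel_measurable_continuous_onI continuous_intros)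
  then have "(\<lambda>x. exp (\<i> * of_int j * complex_of_real x)) \<in> borel_measurable lebesgue"
    by (intro measurable_completion) simp
  then show "set_borel_measurable lebesgue {0..2*pi}
      (\<lambda>x. f x * exp (\<i> * of_int j * complex_of_real x))"
    using assms unfolding set_borel_measurable_def set_integrable_def
    by (simp add: mult_scaleR_left[symmetric] del: mult_scaleR_left) measurable
  show "AE x in lebesgue. x \<in> {0..2*pi} \<longrightarrow>
      norm (f x * exp (\<i> * of_int j * complex_of_real x)) \<le> norm (f x)"
    by (simp add: norm_mult)
qed

lemma fourier_coeff_diff:
  assumes "set_integrable lebesgue {0..2*pi} f" "set_integrable lebesgue {0..2*pi} g"
  shows "fourier_coeff (\<lambda>x. f x - g x) j = fourier_coeff f j - fourier_coeff g j"
  using set_integrable_mult_exp[OF assms(1), of "- j"]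
    set_integrable_mult_exp[OF assms(2), of "- j"]
  by (simp add: fourier_coeff_def left_diff_distrib right_diff_distrib)

lemma fourier_coeff_trig_poly:
  assumes "finite R"
  shows "fourier_coeff (\<lambda>x. \<Sum>k\<in>R. c k * exp (\<i> * of_int k * complex_of_real x)) j =
    (if j \<in> R then c j else 0)"
proof -
  have "(\<lambda>x. (\<Sum>k\<in>R. c k * exp (\<i> * of_int k * complex_of_real x)) *
        exp (- (\<i> * of_int j * complex_of_real x))) =
      (\<lambda>x. \<Sum>k\<in>R. c k * exp (\<i> * of_int (k - j) * complex_of_real x))"
    unfolding sum_distrib_right
    by (intro ext sum.cong refl) (simp add: exp_add[symmetric] algebra_simps)
  moreover have
    "(LINT x:{0..2*pi}|lebesgue. \<Sum>k\<in>R. c k * exp (\<i> * of_int (k - j) * complex_of_real x))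
      = integral {0..2*pi} (\<lambda>x. \<Sum>k\<in>R. c k * exp (\<i> * of_int (k - j) * complex_of_real x))"
    by (intro set_lebesgue_integral_eq_integral(2) absolutely_integrable_continuous_real
        continuous_intros)
  moreover have "\<dots> = (\<Sum>k\<in>R. c k * (if k = j then 2 * pi else 0))"
    using assms by (subst integral_sum)
      (auto simp: integral_exp_int intro!: integrable_continuous_real continuous_intros
        simp del: of_int_diff)
  ultimately show ?thesis
    using assms by (simp add: fourier_coeff_def if_distrib cong: if_cong)
qed

lemma best_approx_le_orl_norm_high_coeffs:
  assumes "in_L f" "1 \<le> n"
  shows "best_approx M n f
    \<le> orl_norm M (\<lambda>k. if \<bar>k\<bar> < int n then 0 else fourier_coeff f k)"
proof -
  define R where "R = {- int (n - 1)..int (n - 1)}"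
  define t where "t x = (\<Sum>k\<in>R. fourier_coeff f k * exp (\<i> * of_int k * complex_of_real x))" for x
  have "t \<in> trig_polys (n - 1)" unfolding trig_polys_def t_def R_def by blast
  then have "best_approx M n f \<le> orl_norm M (fourier_coeff (\<lambda>x. f x - t x))"
    unfolding best_approx_def by (rule INF_lower)
  moreover have
    "fourier_coeff (\<lambda>x. f x - t x) = (\<lambda>k. if \<bar>k\<bar> < int n then 0 else fourier_coeff f k)"
  proof
    fix k
    have "set_integrable lebesgue {0..2*pi} t"
      unfolding t_def by (intro absolutely_integrable_continuous_real continuous_intros)
    then have "fourier_coeff (\<lambda>x. f x - t x) k = fourier_coeff f k - fourier_coeff t k"
      using assms(1) by (intro fourier_coeff_diff) (auto simp: in_L_def)
    moreover have "fourier_coeff t k = (if k \<in> R then fourier_coeff f k else 0)"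
      unfolding t_def by (rule fourier_coeff_trig_poly) (simp add: R_def)
    moreover have "k \<in> R \<longleftrightarrow> \<bar>k\<bar> < int n" using assms(2) by (auto simp: R_def)
    ultimately show "fourier_coeff (\<lambda>x. f x - t x) k =
        (if \<bar>k\<bar> < int n then 0 else fourier_coeff f k)" by simp
  qed
  ultimately show ?thesis by simp
qed

section \<open>The class Phi and the integrals I\<close>

lemma Phi_classD:
  assumes "\<phi> \<in> Phi_class"
  shows "continuous_on UNIV \<phi>" "0 \<le> \<phi> t" "\<phi> (- t) = \<phi> t" "{t. \<phi> t = 0} \<in> null_sets lborel"
  using assms by (auto simp: Phi_class_def)

lemma Phi_class_bounded:
  assumes "\<phi> \<in> Phi_class"
  obtains B where "\<And>t. \<bar>\<phi> t\<bar> \<le> B"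
proof -
  obtain B where "\<forall>y\<in>range \<phi>. norm y \<le> B" using assms by (auto simp: Phi_class_def bounded_iff)
  then have "\<bar>\<phi> t\<bar> \<le> B" for t by simp
  then show ?thesis by (rule that)
qed

lemma continuous_on_Phi_class_scaled:
  assumes "\<phi> \<in> Phi_class"
  shows "continuous_on UNIV (\<lambda>u. \<phi> (c * u / d))"
proof -
  have "continuous_on UNIV (\<lambda>u. (c / d) * u)" by (intro continuous_intros)
  then have "continuous_on UNIV (\<lambda>u. \<phi> ((c / d) * u))"
    by (rule continuous_on_compose2[OF Phi_classD(1)[OF assms]]) simp
  then show ?thesis by simp
qed

lemma borel_measurable_Phi_class_scaled:
  "\<phi> \<in> Phi_class \<Longrightarrow> (\<lambda>u. \<phi> (c * u / d)) \<in> borel_measurable borel"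
  by (rule borel_measurable_continuous_onI[OF continuous_on_Phi_class_scaled])

lemma integrable_bounded_continuous:
  fixes g :: "real \<Rightarrow> real"
  assumes "finite_measure M" "sets M = sets borel" "continuous_on UNIV g" "\<And>x. \<bar>g x\<bar> \<le> B"
  shows "integrable M g"
proof -
  have "g \<in> borel_measurable M"
    using borel_measurable_continuous_onI[OF assms(3)] measurable_cong_sets[OF assms(2) refl]
    by blast
  then show ?thesis
    using assms(4) by (intro finite_measure.integrable_const_bound[OF assms(1)]) auto
qed

lemma integrable_LS_measure_Phi_class_scaled:
  assumes "v \<in> V_set \<tau>" "\<phi> \<in> Phi_class"
  shows "integrable (LS_measure \<tau> v) (\<lambda>u. \<phi> (c * u / d))"
proof -
  obtain B where "\<And>t. \<bar>\<phi> t\<bar> \<le> B" using Phi_class_bounded[OF assms(2)] by blast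
  then show ?thesis
    using finite_borel_measure_LS_measure[OF assms(1)] continuous_on_Phi_class_scaled[OF assms(2)]
    by (intro integrable_bounded_continuous[where B=B]) (auto simp: finite_borel_measure_def)
qed

lemma LS_integral_nonneg: "(\<And>u. 0 \<le> g u) \<Longrightarrow> 0 \<le> LS_integral \<tau> v g"
  unfolding LS_integral_def set_lebesgue_integral_def by (intro integral_nonneg_AE) auto

lemma I_fun_nonneg:
  assumes "\<And>t. 0 \<le> \<phi> t"
  shows "0 \<le> I_fun n \<phi> \<tau> v"
  unfolding I_fun_def using assms by (intro cINF_greatest LS_integral_nonneg) auto

lemma I_fun_le_LS_integral:
  assumes "\<And>t. 0 \<le> \<phi> t" "n \<le> k"
  shows "I_fun n \<phi> \<tau> v \<le> LS_integral \<tau> v (\<lambda>u. \<phi> (real k * u / real n))"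
proof -
  have "bdd_below ((\<lambda>k. LS_integral \<tau> v (\<lambda>u. \<phi> (real k * u / real n))) ` {k. n \<le> k})"
    using assms(1) by (intro bdd_belowI[of _ 0]) (auto intro: LS_integral_nonneg)
  then show ?thesis unfolding I_fun_def using assms(2) by (intro cINF_lower) auto
qed

lemma I_fun_le_nn_integral:
  assumes v: "v \<in> V_set \<tau>" and \<phi>: "\<phi> \<in> Phi_class" and k: "int n \<le> \<bar>k\<bar>"
  shows "ennreal (I_fun n \<phi> \<tau> v) \<le> (\<integral>\<^sup>+u. \<phi> (of_int k * u / real n) \<partial>LS_measure \<tau> v)"
proof -
  have even: "\<phi> (\<bar>of_int k\<bar> * u / real n) = \<phi> (of_int k * u / real n)" for u
  proof (cases "0 \<le> k")
    case False
    then have "\<bar>of_int k\<bar> * u / real n = - (of_int k * u / real n)" by simp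
    then show ?thesis by (simp only: Phi_classD(3)[OF \<phi>])
  qed simp
  have "I_fun n \<phi> \<tau> v \<le> LS_integral \<tau> v (\<lambda>u. \<phi> (real (nat \<bar>k\<bar>) * u / real n))"
    using k by (intro I_fun_le_LS_integral Phi_classD(2)[OF \<phi>]) auto
  also have "\<dots> = integral\<^sup>L (LS_measure \<tau> v) (\<lambda>u. \<phi> (of_int k * u / real n))"
    by (simp add: even LS_integral_eq_integral[OF v] borel_measurable_Phi_class_scaled[OF \<phi>])
  finally have "ennreal (I_fun n \<phi> \<tau> v) \<le>
      ennreal (integral\<^sup>L (LS_measure \<tau> v) (\<lambda>u. \<phi> (of_int k * u / real n)))"
    by (rule ennreal_leI)
  also have "\<dots> = (\<integral>\<^sup>+u. \<phi> (of_int k * u / real n) \<partial>LS_measure \<tau> v)"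
    using integrable_LS_measure_Phi_class_scaled[OF v \<phi>] Phi_classD(2)[OF \<phi>]
    by (intro nn_integral_eq_integral[symmetric]) auto
  finally show ?thesis .
qed

section \<open>The estimate for a fixed v\<close>

lemma sum_le_orl_norm:
  assumes "lam \<in> Lambda_set M" "finite F"
  shows "(\<Sum>k\<in>F. ennreal (lam k * norm (c k))) \<le> orl_norm M c"
proof -
  have "(\<Sum>k\<in>F. ennreal (lam k * norm (c k))) = (\<Sum>\<^sub>\<infinity>k\<in>F. ennreal (lam k * norm (c k)))"
    using assms(2) by simp
  also have "\<dots> \<le> (\<Sum>\<^sub>\<infinity>k. ennreal (lam k * norm (c k)))"
    by (intro infsum_mono_neutral nonneg_summable_on_complete) auto
  also have "\<dots> \<le> orl_norm M c"
    unfolding orl_norm_def by (rule SUP_upper[OF assms(1)])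
  finally show ?thesis .
qed

lemma orl_norm_le_modulus:
  assumes "\<bar>h\<bar> \<le> \<delta>"
  shows "orl_norm M (\<lambda>k. complex_of_real (\<phi> (of_int k * h)) * fourier_coeff f k)
    \<le> modulus M \<phi> f \<delta>"
  unfolding modulus_def using assms by (intro SUP_upper) simp

lemma weighted_sum_le_modulus:
  assumes "\<phi> \<in> Phi_class" "lam \<in> Lambda_set M" "finite F" "\<bar>h\<bar> \<le> \<delta>"
  shows "(\<Sum>k\<in>F. ennreal (lam k * norm (fourier_coeff f k) * \<phi> (of_int k * h)))
    \<le> modulus M \<phi> f \<delta>"
proof -
  have "(\<Sum>k\<in>F. ennreal (lam k * norm (fourier_coeff f k) * \<phi> (of_int k * h))) =
      (\<Sum>k\<in>F. ennreal (lam k * norm (complex_of_real (\<phi> (of_int k * h)) * fourier_coeff f k)))"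
    using Phi_classD(2)[OF assms(1)] by (simp add: norm_mult mult_ac)
  also have "\<dots> \<le> orl_norm M (\<lambda>k. complex_of_real (\<phi> (of_int k * h)) * fourier_coeff f k)"
    by (rule sum_le_orl_norm[OF assms(2,3)])
  also have "\<dots> \<le> modulus M \<phi> f \<delta>"
    by (rule orl_norm_le_modulus[OF assms(4)])
  finally show ?thesis .
qed

lemma Phi_class_exists_nonzero:
  assumes "\<phi> \<in> Phi_class" "0 < \<delta>" "k \<noteq> 0"
  shows "\<exists>h. \<bar>h\<bar> \<le> \<delta> \<and> \<phi> (of_int k * h) \<noteq> 0"
proof (rule ccontr)
  assume zero: "\<not> ?thesis"
  have sub: "{0..\<bar>of_int k\<bar> * \<delta>} \<subseteq> {t. \<phi> t = 0}"
  proof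
    fix t assume "t \<in> {0..\<bar>of_int k\<bar> * \<delta>}"
    then have "\<bar>t / of_int k\<bar> \<le> \<delta>"
      using assms(3) by (simp add: abs_divide divide_le_eq mult.commute)
    then have "\<phi> (of_int k * (t / of_int k)) = 0" using zero by blast
    then show "t \<in> {t. \<phi> t = 0}" using assms(3) by simp
  qed
  have "{0..\<bar>of_int k\<bar> * \<delta>} \<in> null_sets lborel"
    by (rule null_sets_subset[OF Phi_classD(4)[OF assms(1)] _ sub]) simp
  then have "emeasure lborel {0..\<bar>of_int k\<bar> * \<delta>} = 0" by auto
  then show False using assms(2,3) by simp
qed

lemma fourier_coeff_eq_0_if_modulus_eq_0:
  assumes \<phi>: "\<phi> \<in> Phi_class" and "0 < \<delta>" "modulus M \<phi> f \<delta> = 0"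
    and lam: "lam \<in> Lambda_set M" and "k \<noteq> 0"
  shows "fourier_coeff f k = 0"
proof -
  obtain h where h: "\<bar>h\<bar> \<le> \<delta>" "\<phi> (of_int k * h) \<noteq> 0"
    using Phi_class_exists_nonzero[OF \<phi> assms(2,5)] by blast
  have "ennreal (lam k * norm (fourier_coeff f k) * \<phi> (of_int k * h)) \<le> 0"
    using weighted_sum_le_modulus[OF \<phi> lam _ h(1), of "{k}" f] assms(3) by simp
  moreover have "0 < lam k" "0 < \<phi> (of_int k * h)"
    using lam h(2) Phi_classD(2)[OF \<phi>] by (auto simp: Lambda_set_def order_less_le)
  ultimately show ?thesis by (simp add: ennreal_le_iff2 zero_less_mult_iff)
qed

lemma sum_high_coeffs_mult_I_fun_le:
  fixes f :: "real \<Rightarrow> complex" and n :: nat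
  assumes v: "v \<in> V_set \<tau>" and \<phi>: "\<phi> \<in> Phi_class" and lam: "lam \<in> Lambda_set M"
    and F: "finite F"
  defines "a \<equiv> \<lambda>k. lam k * norm (if \<bar>k\<bar> < int n then 0 else fourier_coeff f k)"
  shows "(\<Sum>k\<in>F. ennreal (a k)) * ennreal (I_fun n \<phi> \<tau> v)
    \<le> modulus M \<phi> f (\<tau> / real n) * ennreal (v \<tau> - v 0)"
proof -
  let ?\<mu> = "LS_measure \<tau> v" and ?\<omega> = "modulus M \<phi> f (\<tau> / real n)"
  let ?\<phi>k = "\<lambda>k u. \<phi> (of_int k * u / real n)"
  have lam_pos: "0 < lam k" for k using lam by (auto simp: Lambda_set_def)
  have \<phi>_nonneg: "0 \<le> \<phi> t" for t by (rule Phi_classD(2)[OF \<phi>])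
  have [measurable]: "(\<lambda>u. ennreal (?\<phi>k k u)) \<in> borel_measurable ?\<mu>" for k
    using measurable_compose[OF borel_measurable_Phi_class_scaled[OF \<phi>] measurable_ennreal]
    by (simp add: measurable_cong_sets[OF sets_LS_measure refl])
  have "(\<Sum>k\<in>F. ennreal (a k)) * ennreal (I_fun n \<phi> \<tau> v)
      \<le> (\<Sum>k\<in>F. ennreal (a k) * (\<integral>\<^sup>+u. ?\<phi>k k u \<partial>?\<mu>))"
    unfolding sum_distrib_right
  proof (rule sum_mono)
    fix k
    show "ennreal (a k) * ennreal (I_fun n \<phi> \<tau> v)
      \<le> ennreal (a k) * (\<integral>\<^sup>+u. ?\<phi>k k u \<partial>?\<mu>)"
    proof (cases "\<bar>k\<bar> < int n")
      case False
      then show ?thesis by (intro mult_left_mono I_fun_le_nn_integral[OF v \<phi>]) auto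
    qed (simp add: a_def)
  qed
  also have "\<dots> = (\<integral>\<^sup>+u. (\<Sum>k\<in>F. ennreal (a k) * ?\<phi>k k u) \<partial>?\<mu>)"
    by (simp add: nn_integral_sum nn_integral_cmult)
  also have "\<dots> \<le> (\<integral>\<^sup>+u. ?\<omega> \<partial>?\<mu>)"
  proof (rule nn_integral_mono_AE)
    show "AE u in ?\<mu>. (\<Sum>k\<in>F. ennreal (a k) * ?\<phi>k k u) \<le> ?\<omega>"
      using AE_LS_measure_in_interval[OF v]
    proof eventually_elim
      fix u assume u: "u \<in> {0..\<tau>}"
      have "(\<Sum>k\<in>F. ennreal (a k) * ?\<phi>k k u)
          \<le> (\<Sum>k\<in>F. ennreal (lam k * norm (fourier_coeff f k) * \<phi> (of_int k * (u / real n))))"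
      proof (rule sum_mono)
        fix k
        have "0 \<le> a k" "a k \<le> lam k * norm (fourier_coeff f k)"
          using lam_pos[of k] by (auto simp: a_def)
        then show "ennreal (a k) * ?\<phi>k k u
            \<le> ennreal (lam k * norm (fourier_coeff f k) * \<phi> (of_int k * (u / real n)))"
          using \<phi>_nonneg by (simp add: ennreal_mult[symmetric] mult_right_mono ennreal_leI)
      qed
      also have "\<dots> \<le> ?\<omega>"
        using u by (intro weighted_sum_le_modulus[OF \<phi> lam F]) (simp add: divide_right_mono)
      finally show "(\<Sum>k\<in>F. ennreal (a k) * ?\<phi>k k u) \<le> ?\<omega>" .
    qed
  qed
  also have "\<dots> = ?\<omega> * ennreal (v \<tau> - v 0)"
    by (simp add: emeasure_LS_measure_UNIV[OF v])
  finally show ?thesis .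
qed

lemma ennreal_le_divide_mult_if_mult_le:
  fixes x y :: ennreal and c m :: real
  assumes "0 < c" "0 \<le> m" "x * ennreal c \<le> y * ennreal m"
  shows "x \<le> ennreal (m / c) * y"
proof -
  have "x = x * ennreal c * ennreal (1 / c)"
    using assms(1) by (simp add: mult.assoc ennreal_mult[symmetric])
  also have "\<dots> \<le> y * ennreal m * ennreal (1 / c)"
    by (rule mult_right_mono[OF assms(3)]) simp
  also have "\<dots> = ennreal (m / c) * y"
    using assms(1,2) by (simp add: ennreal_mult[symmetric] mult_ac)
  finally show ?thesis .
qed

lemma best_approx_le_C_ratio_mul_modulus:
  assumes f: "in_L f" and v: "v \<in> V_set \<tau>" and n: "1 \<le> n" and \<phi>: "\<phi> \<in> Phi_class"
  shows "best_approx M n f \<le> C_ratio n \<phi> \<tau> v * modulus M \<phi> f (\<tau> / real n)"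
proof -
  define c where "c k = (if \<bar>k\<bar> < int n then 0 else fourier_coeff f k)" for k
  let ?I = "I_fun n \<phi> \<tau> v" and ?\<omega> = "modulus M \<phi> f (\<tau> / real n)"
  have "best_approx M n f \<le> orl_norm M c"
    unfolding c_def by (rule best_approx_le_orl_norm_high_coeffs[OF f n])
  moreover have "orl_norm M c \<le> C_ratio n \<phi> \<tau> v * ?\<omega>"
  proof (cases "?I = 0")
    case True
    \<comment> \<open>Then the ratio is \<infinity>; the product \<infinity> * 0 = 0 is harmless only because
      a vanishing modulus forces all coefficients c k to vanish.\<close>
    have zero: "orl_norm M c = 0" if "?\<omega> = 0"
    proof -
      have c0: "c k = 0" if "lam \<in> Lambda_set M" for lam k
        using fourier_coeff_eq_0_if_modulus_eq_0[OF \<phi> _ \<open>?\<omega> = 0\<close> that] V_set_imp_pos[OF v] n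
        by (cases "k = 0") (auto simp: c_def)
      show ?thesis unfolding orl_norm_def by (rule antisym[OF SUP_least]) (simp_all add: c0)
    qed
    have "C_ratio n \<phi> \<tau> v = top" using True by (simp add: C_ratio_def)
    then show ?thesis using zero by (cases "?\<omega> = 0") (simp_all add: ennreal_top_mult)
  next
    case False
    moreover have "0 \<le> ?I" by (rule I_fun_nonneg[OF Phi_classD(2)[OF \<phi>]])
    ultimately have I_pos: "0 < ?I" by simp
    have "orl_norm M c \<le> ennreal ((v \<tau> - v 0) / ?I) * ?\<omega>"
      unfolding orl_norm_def
    proof (intro SUP_least infsum_le_finite_sums nonneg_summable_on_complete)
      fix lam F assume "lam \<in> Lambda_set M" "finite (F :: int set)"
      then show "(\<Sum>k\<in>F. ennreal (lam k * norm (c k))) \<le> ennreal ((v \<tau> - v 0) / ?I) * ?\<omega>"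
        using sum_high_coeffs_mult_I_fun_le[OF v \<phi>] V_set_increase[OF v] I_pos
        by (intro ennreal_le_divide_mult_if_mult_le) (auto simp: c_def)
    qed simp
    then show ?thesis using False by (simp add: C_ratio_def)
  qed
  ultimately show ?thesis by (rule order_trans)
qed

section \<open>Existence of an extremal function\<close>

definition LS_distribution :: "real \<Rightarrow> (real \<Rightarrow> real) \<Rightarrow> real measure" where
  "LS_distribution \<tau> v = scale_measure (ennreal (1 / (v \<tau> - v 0))) (LS_measure \<tau> v)"

lemma sets_LS_distribution [simp, measurable_cong]: "sets (LS_distribution \<tau> v) = sets borel"
  by (simp add: LS_distribution_def)

lemma real_distribution_LS_distribution:
  assumes v: "v \<in> V_set \<tau>"
  shows "real_distribution (LS_distribution \<tau> v)"
proof -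
  have "emeasure (LS_distribution \<tau> v) UNIV = 1"
    using V_set_increase[OF v]
    by (simp add: LS_distribution_def emeasure_LS_measure_UNIV[OF v] ennreal_mult[symmetric])
  then have "prob_space (LS_distribution \<tau> v)"
    by (intro prob_spaceI) (simp add: LS_distribution_def space_scale_measure)
  then show ?thesis by (simp add: real_distribution_def real_distribution_axioms_def)
qed

lemma AE_LS_distribution_in_interval:
  assumes v: "v \<in> V_set \<tau>"
  shows "AE x in LS_distribution \<tau> v. x \<in> {0..\<tau>}"
proof -
  from AE_LS_measure_in_interval[OF v] obtain N
    where "{x \<in> space (LS_measure \<tau> v). x \<notin> {0..\<tau>}} \<subseteq> N"
      "emeasure (LS_measure \<tau> v) N = 0" "N \<in> sets (LS_measure \<tau> v)"
    by (rule AE_E)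
  then show ?thesis
    by (intro AE_I'[of N]) (auto simp: LS_distribution_def null_sets_def space_scale_measure)
qed

lemma integral_LS_distribution:
  assumes v: "v \<in> V_set \<tau>" and g: "g \<in> borel_measurable borel" "\<And>u. 0 \<le> g u"
  shows "integral\<^sup>L (LS_distribution \<tau> v) g = integral\<^sup>L (LS_measure \<tau> v) g / (v \<tau> - v 0)"
proof -
  have [measurable]: "g \<in> borel_measurable (LS_measure \<tau> v)"
    "g \<in> borel_measurable (LS_distribution \<tau> v)"
    using g(1) by (simp_all add: measurable_cong_sets[OF sets_LS_measure refl]
        measurable_cong_sets[OF sets_LS_distribution refl])
  have "integral\<^sup>L (LS_distribution \<tau> v) g = enn2real (\<integral>\<^sup>+x. g x \<partial>LS_distribution \<tau> v)"
    using g(2) by (intro integral_eq_nn_integral) auto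
  also have "\<dots> = enn2real (ennreal (1 / (v \<tau> - v 0)) * (\<integral>\<^sup>+x. g x \<partial>LS_measure \<tau> v))"
    unfolding LS_distribution_def by (subst nn_integral_scale_measure) auto
  also have "\<dots> = integral\<^sup>L (LS_measure \<tau> v) g / (v \<tau> - v 0)"
    using V_set_increase[OF v] g(2) by (simp add: enn2real_mult integral_eq_nn_integral)
  finally show ?thesis .
qed

definition I_normalized :: "nat \<Rightarrow> (real \<Rightarrow> real) \<Rightarrow> real \<Rightarrow> (real \<Rightarrow> real) \<Rightarrow> real" where
  "I_normalized n \<phi> \<tau> v = I_fun n \<phi> \<tau> v / (v \<tau> - v 0)"

lemma I_normalized_le_integral:
  assumes v: "v \<in> V_set \<tau>" and \<phi>: "\<phi> \<in> Phi_class" and "n \<le> k"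
  shows "I_normalized n \<phi> \<tau> v \<le> integral\<^sup>L (LS_distribution \<tau> v) (\<lambda>u. \<phi> (real k * u / real n))"
proof -
  have "I_fun n \<phi> \<tau> v \<le> LS_integral \<tau> v (\<lambda>u. \<phi> (real k * u / real n))"
    by (intro I_fun_le_LS_integral Phi_classD(2)[OF \<phi>] assms(3))
  then have "I_fun n \<phi> \<tau> v \<le> integral\<^sup>L (LS_measure \<tau> v) (\<lambda>u. \<phi> (real k * u / real n))"
    by (simp add: LS_integral_eq_integral[OF v] borel_measurable_Phi_class_scaled[OF \<phi>])
  then show ?thesis
    using V_set_increase[OF v] Phi_classD(2)[OF \<phi>]
    by (simp add: I_normalized_def integral_LS_distribution[OF v]
        borel_measurable_Phi_class_scaled[OF \<phi>] divide_right_mono)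
qed

lemma C_ratio_antimono:
  assumes v: "v \<in> V_set \<tau>" and w: "w \<in> V_set \<tau>" and \<phi>: "\<phi> \<in> Phi_class"
    and le: "I_normalized n \<phi> \<tau> v \<le> I_normalized n \<phi> \<tau> w"
  shows "C_ratio n \<phi> \<tau> w \<le> C_ratio n \<phi> \<tau> v"
proof (cases "I_fun n \<phi> \<tau> v = 0")
  case False
  have mv: "0 < v \<tau> - v 0" and mw: "0 < w \<tau> - w 0"
    using V_set_increase[OF v] V_set_increase[OF w] by simp_all
  have "0 < I_fun n \<phi> \<tau> v"
    using False I_fun_nonneg[OF Phi_classD(2)[OF \<phi>]] by (simp add: order_less_le)
  then have pos: "0 < I_normalized n \<phi> \<tau> v" using mv by (simp add: I_normalized_def)
  then have "0 < I_normalized n \<phi> \<tau> w" using le by linarith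
  then have "0 < I_fun n \<phi> \<tau> w" using mw by (simp add: I_normalized_def zero_less_divide_iff)
  moreover have "1 / I_normalized n \<phi> \<tau> w \<le> 1 / I_normalized n \<phi> \<tau> v"
    using le pos by (simp add: divide_left_mono)
  ultimately show ?thesis using False \<open>0 < I_fun n \<phi> \<tau> v\<close>
    by (simp add: C_ratio_def I_normalized_def ennreal_leI)
qed (simp add: C_ratio_def)

lemma INF_greaterThan_eq_if_right_continuous:
  fixes F :: "real \<Rightarrow> real"
  assumes mono: "\<And>x y. x \<le> y \<Longrightarrow> F x \<le> F y" and rc: "continuous (at_right x) F"
  shows "(INF y\<in>{x<..}. F y) = F x"
proof (rule antisym)
  have bdd: "bdd_below (F ` {x<..})" by (rule bdd_belowI[of _ "F x"]) (auto intro: mono)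
  have "(F \<longlongrightarrow> F x) (at_right x)" using rc by (simp add: continuous_within)
  moreover have "\<forall>\<^sub>F y in at_right x. (INF y\<in>{x<..}. F y) \<le> F y"
    unfolding eventually_at_right_field by (intro exI[of _ "x + 1"]) (auto intro!: cINF_lower bdd)
  ultimately show "(INF y\<in>{x<..}. F y) \<le> F x"
    by (intro tendsto_lowerbound[of F "F x" "at_right x"]) auto
  show "F x \<le> (INF y\<in>{x<..}. F y)" by (rule cINF_greatest) (auto intro: mono)
qed

lemma cdf_below_support:
  assumes "real_distribution P" "AE x in P. x \<in> {a..b}" "y < a"
  shows "cdf P y = 0"
proof -
  interpret real_distribution P by fact
  have "AE x in P. \<not> x \<le> y" using assms(2) by eventually_elim (use assms(3) in auto)
  then have "prob {x \<in> space P. x \<le> y} = 0" by (rule prob_eq_0_AE)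
  then show ?thesis by (simp add: cdf_def atMost_def)
qed

lemma cdf_above_support:
  assumes "real_distribution P" "AE x in P. x \<in> {a..b}" "b \<le> y"
  shows "cdf P y = 1"
proof -
  interpret real_distribution P by fact
  have "AE x in P. x \<le> y \<longleftrightarrow> True" using assms(2) by eventually_elim (use assms(3) in auto)
  then have "prob {x \<in> space P. x \<le> y} = prob {x \<in> space P. True}" by (rule prob_eq_AE) auto
  then show ?thesis using prob_space by (simp add: cdf_def atMost_def space_eq_univ)
qed

lemma V_set_of_distribution:
  assumes P: "real_distribution P" and \<tau>: "0 < \<tau>" and supp: "AE x in P. x \<in> {0..\<tau>}"
  obtains w where "w \<in> V_set \<tau>" "LS_measure \<tau> w = P" "w \<tau> - w 0 = 1"
proof
  interpret P: real_distribution P by (rule P)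
  \<comment> \<open>w 0 = 0, so that an atom of P at 0 becomes the jump of rc_fun \<tau> w at 0.\<close>
  define w where "w x = (if x \<le> 0 then 0 else cdf P x)" for x
  note cdf0 = cdf_below_support[OF P supp] and cdf1 = cdf_above_support[OF P supp]
  show w_incr: "w \<tau> - w 0 = 1" unfolding w_def using \<tau> cdf1[of \<tau>] by simp
  show "w \<in> V_set \<tau>" unfolding V_set_def
  proof (intro CollectI conjI)
    show "bounded (w ` {0..\<tau>})"
      unfolding bounded_iff w_def using P.cdf_nonneg P.cdf_bounded_prob
      by (intro exI[of _ 1]) (auto simp: abs_le_iff intro: order_trans[OF _ P.cdf_nonneg])
    show "mono_on {0..\<tau>} w" unfolding w_def
      by (rule mono_onI) (auto simp: P.cdf_nonneg P.cdf_nondecreasing)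
    show "\<exists>x\<in>{0..\<tau>}. \<exists>y\<in>{0..\<tau>}. w x \<noteq> w y"
      using w_incr \<tau> by (intro bexI[of _ 0] bexI[of _ \<tau>]) auto
  qed
  have ext_eq: "ext_fun \<tau> w y = (if y = 0 then 0 else cdf P y)" for y
    unfolding ext_fun_def w_def using cdf0 cdf1[of y] cdf1[of \<tau>] \<tau> by auto
  have "rc_fun \<tau> w x = cdf P x" for x
  proof (cases "0 \<le> x")
    case True
    have "rc_fun \<tau> w x = (INF y\<in>{x<..}. cdf P y)"
      unfolding rc_fun_def using True by (intro INF_cong) (auto simp: ext_eq)
    also have "\<dots> = cdf P x"
      by (rule INF_greaterThan_eq_if_right_continuous[OF P.cdf_nondecreasing P.cdf_is_right_cont])
    finally show ?thesis .
  next
    case False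
    have "rc_fun \<tau> w x = (INF y\<in>{x<..}. if y = 0 then 0 else cdf P y)"
      unfolding rc_fun_def by (simp add: ext_eq)
    also have "\<dots> = 0"
    proof (rule antisym)
      show "(INF y\<in>{x<..}. if y = 0 then 0 else cdf P y) \<le> 0"
        using False cdf0[of "x / 2"]
        by (intro cINF_lower2[where x = "x / 2"] bdd_belowI[of _ 0]) (auto simp: P.cdf_nonneg)
    qed (rule cINF_greatest, auto simp: P.cdf_nonneg)
    finally show ?thesis using False cdf0[of x] by simp
  qed
  then have "rc_fun \<tau> w = cdf P" by (rule ext)
  then have "LS_measure \<tau> w = interval_measure (cdf P)" by (simp add: LS_measure_def)
  also have "\<dots> = P"
  proof (rule cdf_unique[OF _ P])
    show "real_distribution (interval_measure (cdf P))"
      by (rule real_distribution_interval_measure[OF P.cdf_nondecreasing P.cdf_is_right_cont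
            P.cdf_lim_at_bot P.cdf_lim_at_top_prob])
    show "cdf (interval_measure (cdf P)) = cdf P"
      by (rule cdf_interval_measure[OF P.cdf_nondecreasing P.cdf_is_right_cont P.cdf_lim_at_bot])
  qed
  finally show "LS_measure \<tau> w = P" .
qed

lemma tight_if_AE_in_interval:
  assumes "\<And>j. real_distribution (P j)" "\<And>j. AE x in P j. x \<in> {a..b}"
  shows "tight P"
  unfolding tight_def
proof (intro conjI allI impI assms(1))
  fix e :: real assume "0 < e"
  have "measure (P j) {a - 1<..max a b} = 1" for j
  proof -
    interpret real_distribution "P j" by (rule assms(1))
    have "AE x in P j. x \<in> {a - 1<..max a b}" using assms(2)[of j] by eventually_elim auto
    then show ?thesis by (simp add: prob_eq_1)
  qed
  with \<open>0 < e\<close> show "\<exists>a' b'. a' < b' \<and> (\<forall>j. 1 - e < measure (P j) {a'<..b'})"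
    by (intro exI[of _ "a - 1"] exI[of _ "max a b"]) auto
qed

lemma AE_in_interval_if_weak_conv:
  assumes P: "\<And>j. real_distribution (P j)" "\<And>j. AE x in P j. x \<in> {a..b}"
    and Q: "real_distribution Q" and conv: "weak_conv_m P Q"
  shows "AE x in Q. x \<in> {a..b}"
proof -
  define g where "g x = min 1 (max 0 (a - x) + max 0 (x - b))" for x :: real
  have g_cont: "continuous_on UNIV g" unfolding g_def by (intro continuous_intros)
  have g_bound: "\<bar>g x\<bar> \<le> 1" and g_nonneg: "0 \<le> g x" for x by (auto simp: g_def)
  have "(\<lambda>j. integral\<^sup>L (P j) g) \<longlonglongrightarrow> integral\<^sup>L Q g"
    using g_cont g_bound
    by (intro weak_conv_imp_integral_bdd_continuous_conv[OF P(1) Q conv])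
      (auto simp: continuous_on_eq_continuous_at)
  moreover have "integral\<^sup>L (P j) g = 0" for j
    by (rule integral_eq_zero_AE) (use P(2)[of j] in \<open>eventually_elim, simp add: g_def\<close>)
  ultimately have "integral\<^sup>L Q g = 0" using LIMSEQ_unique[OF _ tendsto_const] by simp
  moreover have "integrable Q g"
    using g_cont g_bound
    by (intro integrable_bounded_continuous[where B=1] real_distribution.events_eq_borel[OF Q]
        prob_space.finite_measure real_distribution.axioms(1)[OF Q])
  ultimately have "AE x in Q. g x = 0" using g_nonneg by (simp add: integral_nonneg_eq_0_iff_AE)
  then show ?thesis
    by eventually_elim (auto simp: g_def min_def max_def split: if_splits)
qed

lemma I_fun_ge_limit_if_weak_conv:
  assumes \<phi>: "\<phi> \<in> Phi_class" and v: "\<And>j. v j \<in> V_set \<tau>"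
    and lim: "(\<lambda>j. I_normalized n \<phi> \<tau> (v j)) \<longlonglongrightarrow> S"
    and w: "w \<in> V_set \<tau>" "real_distribution (LS_measure \<tau> w)"
    and conv: "weak_conv_m (\<lambda>j. LS_distribution \<tau> (v j)) (LS_measure \<tau> w)"
  shows "S \<le> I_fun n \<phi> \<tau> w"
  unfolding I_fun_def
proof (rule cINF_greatest)
  fix k assume k: "k \<in> {k. n \<le> k}"
  obtain B where B: "\<And>t. \<bar>\<phi> t\<bar> \<le> B" using Phi_class_bounded[OF \<phi>] by blast
  have "(\<lambda>j. integral\<^sup>L (LS_distribution \<tau> (v j)) (\<lambda>u. \<phi> (real k * u / real n)))
      \<longlonglongrightarrow> integral\<^sup>L (LS_measure \<tau> w) (\<lambda>u. \<phi> (real k * u / real n))"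
    using continuous_on_Phi_class_scaled[OF \<phi>] B
    by (intro weak_conv_imp_integral_bdd_continuous_conv
        [OF real_distribution_LS_distribution[OF v] w(2) conv])
      (auto simp: continuous_on_eq_continuous_at)
  then have "S \<le> integral\<^sup>L (LS_measure \<tau> w) (\<lambda>u. \<phi> (real k * u / real n))"
    using k by (intro LIMSEQ_le[OF lim]) (auto intro: I_normalized_le_integral[OF v \<phi>])
  then show "S \<le> LS_integral \<tau> w (\<lambda>u. \<phi> (real k * u / real n))"
    by (simp add: LS_integral_eq_integral[OF w(1)] borel_measurable_Phi_class_scaled[OF \<phi>])
qed auto

lemma I_normalized_le_bound:
  assumes v: "v \<in> V_set \<tau>" and \<phi>: "\<phi> \<in> Phi_class" and B: "\<And>t. \<bar>\<phi> t\<bar> \<le> B"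
  shows "I_normalized n \<phi> \<tau> v \<le> B"
proof -
  interpret real_distribution "LS_distribution \<tau> v"
    by (rule real_distribution_LS_distribution[OF v])
  have "integrable (LS_distribution \<tau> v) (\<lambda>u. \<phi> (real n * u / real n))"
    by (rule integrable_bounded_continuous[OF finite_measure_axioms _
          continuous_on_Phi_class_scaled[OF \<phi>] B]) simp
  then have "integral\<^sup>L (LS_distribution \<tau> v) (\<lambda>u. \<phi> (real n * u / real n)) \<le> B"
    using B by (intro integral_le_const) (auto simp: abs_le_iff)
  then show ?thesis using I_normalized_le_integral[OF v \<phi> order_refl, of n] by linarith
qed

lemma I_normalized_attains_Sup:
  assumes \<tau>: "0 < \<tau>" and \<phi>: "\<phi> \<in> Phi_class"
  obtains w where "w \<in> V_set \<tau>"
    "\<And>v. v \<in> V_set \<tau> \<Longrightarrow> I_normalized n \<phi> \<tau> v \<le> I_normalized n \<phi> \<tau> w"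
proof -
  let ?q = "I_normalized n \<phi> \<tau>"
  obtain B where B: "\<And>t. \<bar>\<phi> t\<bar> \<le> B" using Phi_class_bounded[OF \<phi>] by blast
  have bdd: "bdd_above (?q ` V_set \<tau>)"
    using I_normalized_le_bound[OF _ \<phi> B] by (intro bdd_aboveI[of _ B]) auto
  define S where "S = Sup (?q ` V_set \<tau>)"
  have "S \<in> closure (?q ` V_set \<tau>)"
    unfolding S_def using id_in_V_set[OF \<tau>] bdd by (intro closure_contains_Sup) auto
  then obtain x where x: "\<And>j. x j \<in> ?q ` V_set \<tau>" "x \<longlonglongrightarrow> S"
    unfolding closure_sequential by blast
  then have "\<forall>j. \<exists>u. u \<in> V_set \<tau> \<and> x j = ?q u" by blast
  then obtain v where "\<forall>j. v j \<in> V_set \<tau> \<and> x j = ?q (v j)" by (rule choice[THEN exE])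
  then have v: "\<And>j. v j \<in> V_set \<tau>" and "x = (\<lambda>j. ?q (v j))" by auto
  with x(2) have lim: "(\<lambda>j. ?q (v j)) \<longlonglongrightarrow> S" by simp
  have "tight (\<lambda>j. LS_distribution \<tau> (v j))"
    using real_distribution_LS_distribution[OF v] AE_LS_distribution_in_interval[OF v]
    by (rule tight_if_AE_in_interval)
  then obtain r Q where r: "strict_mono r" and Q: "real_distribution Q"
    and conv: "weak_conv_m (\<lambda>j. LS_distribution \<tau> (v (r j))) Q"
    using tight_imp_convergent_subsubsequence[OF _ strict_mono_id] by (fastforce simp: o_def)
  have "AE x in Q. x \<in> {0..\<tau>}"
    using real_distribution_LS_distribution[OF v] AE_LS_distribution_in_interval[OF v] Q conv
    by (rule AE_in_interval_if_weak_conv)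
  then obtain w where w: "w \<in> V_set \<tau>" "LS_measure \<tau> w = Q" "w \<tau> - w 0 = 1"
    using V_set_of_distribution[OF Q \<tau>] by blast
  have "S \<le> I_fun n \<phi> \<tau> w"
    using \<phi> v LIMSEQ_subseq_LIMSEQ[OF lim r] w Q conv
    by (intro I_fun_ge_limit_if_weak_conv) (auto simp: o_def)
  then have "?q u \<le> ?q w" if "u \<in> V_set \<tau>" for u
    using cSup_upper[OF _ bdd, of "?q u"] that w(3) by (simp add: S_def I_normalized_def)
  with w(1) show ?thesis by (rule that)
qed

lemma C_const_attained:
  assumes "0 < \<tau>" "\<phi> \<in> Phi_class"
  shows "\<exists>v\<in>V_set \<tau>. C_ratio n \<phi> \<tau> v = C_const n \<phi> \<tau>"
proof -
  obtain w where w: "w \<in> V_set \<tau>"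
    and max: "\<And>v. v \<in> V_set \<tau> \<Longrightarrow> I_normalized n \<phi> \<tau> v \<le> I_normalized n \<phi> \<tau> w"
    using I_normalized_attains_Sup[OF assms] by blast
  have "C_ratio n \<phi> \<tau> w = C_const n \<phi> \<tau>"
    unfolding C_const_def
    using C_ratio_antimono[OF _ w assms(2) max] by (intro antisym INF_greatest INF_lower w) auto
  with w show ?thesis by blast
qed

theorem theorem1:
  fixes M :: "int \<Rightarrow> real \<Rightarrow> real" and f :: "real \<Rightarrow> complex"
    and \<tau> :: real and n :: nat and \<phi> :: "real \<Rightarrow> real"
  assumes "\<And>k. orlicz_fun (M k)"
    and "in_L f" and "lux_norm M (fourier_coeff f) < top"
    and "\<tau> > 0" and "n \<ge> 1" and "\<phi> \<in> Phi_class"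
  shows "best_approx M n f \<le> C_const n \<phi> \<tau> * modulus M \<phi> f (\<tau> / real n)
         \<and> (\<exists>v\<in>V_set \<tau>. C_ratio n \<phi> \<tau> v = C_const n \<phi> \<tau>)"
proof -
  obtain v where v: "v \<in> V_set \<tau>" "C_ratio n \<phi> \<tau> v = C_const n \<phi> \<tau>"
    using C_const_attained[OF assms(4,6)] by blast
  have "best_approx M n f \<le> C_ratio n \<phi> \<tau> v * modulus M \<phi> f (\<tau> / real n)"
    by (rule best_approx_le_C_ratio_mul_modulus[OF assms(2) v(1) assms(5,6)])
  with v show ?thesis by auto
qed

end
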